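(* Let $K\in{\rm Alg}(V)$ be a unital commutative associative $F$-algebra and let $f,g\in{\rm Gl}(V)$. Write $L(x)$ for left multiplication by $x$ in $K$. The following are equivalent: (i) $K^{(f,g)}$ is a unital algebra; (ii) there exists $w\in K^\times$ with $K^{(f,g)}=K^{(w)}$; (iii) $K^{(f,g)}\cong K$. Moreover, in this case $w$ is uniquely determined, $w^{-1}$ is the unit element of $K^{(f,g)}$, and there exist $u,v\in K$ with $w=uv$, $f=L(u)$ and $g=L(v)$. Finally, an $F$-linear map $\varphi:K^{(f,g)}\to K$ is an algebra isomorphism if and only if $\varphi=\sigma\circ L(w)$ for some $\sigma\in{\rm Aut}_F(K)$.
   Context: $F$ is a field and $V$ is a finite-dimensional $F$-vector space. ${\rm Alg}(V)$ denotes the set of $F$-bilinear multiplications on $V$; $xAy$ denotes the product of $x,y$ in $A\in{\rm Alg}(V)$. For $f,g\in{\rm End}_F(V)$ the principal Albert homotope $A^{(f,g)}$ is $V$ with product $xA^{(f,g)}y=f(x)A\,g(y)$. For $w\in K^\times$ (the invertible elements of $K$), the Jordan isotope $K^{(w)}\in{\rm Alg}(V)$ is defined by $xK^{(w)}y=xwy$. *)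

theory Defs
  imports Complex_Main
begin

definition bilinear_mult :: "('f::field \<Rightarrow> 'v::ab_group_add \<Rightarrow> 'v) \<Rightarrow> ('v \<Rightarrow> 'v \<Rightarrow> 'v) \<Rightarrow> bool" where
  "bilinear_mult scale A \<longleftrightarrow>
     (\<forall>x. Vector_Spaces.linear scale scale (A x)) \<and>
     (\<forall>y. Vector_Spaces.linear scale scale (\<lambda>x. A x y))"

definition is_unit_elem :: "('v \<Rightarrow> 'v \<Rightarrow> 'v) \<Rightarrow> 'v \<Rightarrow> bool" where
  "is_unit_elem A e \<longleftrightarrow> (\<forall>x. A e x = x \<and> A x e = x)"

definition unital :: "('v \<Rightarrow> 'v \<Rightarrow> 'v) \<Rightarrow> bool" where
  "unital A \<longleftrightarrow> (\<exists>e. is_unit_elem A e)"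

definition commutative_alg :: "('v \<Rightarrow> 'v \<Rightarrow> 'v) \<Rightarrow> bool" where
  "commutative_alg A \<longleftrightarrow> (\<forall>x y. A x y = A y x)"

definition associative_alg :: "('v \<Rightarrow> 'v \<Rightarrow> 'v) \<Rightarrow> bool" where
  "associative_alg A \<longleftrightarrow> (\<forall>x y z. A (A x y) z = A x (A y z))"

definition is_inverse :: "('v \<Rightarrow> 'v \<Rightarrow> 'v) \<Rightarrow> 'v \<Rightarrow> 'v \<Rightarrow> bool" where
  "is_inverse A w z \<longleftrightarrow> (\<exists>e. is_unit_elem A e \<and> A w z = e \<and> A z w = e)"

definition invertible_elem :: "('v \<Rightarrow> 'v \<Rightarrow> 'v) \<Rightarrow> 'v \<Rightarrow> bool" where
  "invertible_elem A w \<longleftrightarrow> (\<exists>z. is_inverse A w z)"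

definition lmult :: "('v \<Rightarrow> 'v \<Rightarrow> 'v) \<Rightarrow> 'v \<Rightarrow> 'v \<Rightarrow> 'v" where
  "lmult A x = (\<lambda>y. A x y)"

definition homotope :: "('v \<Rightarrow> 'v \<Rightarrow> 'v) \<Rightarrow> ('v \<Rightarrow> 'v) \<Rightarrow> ('v \<Rightarrow> 'v) \<Rightarrow> 'v \<Rightarrow> 'v \<Rightarrow> 'v" where
  "homotope A f g = (\<lambda>x y. A (f x) (g y))"

text \<open>Jordan isotope K^(w): x K^(w) y = x w y (= (xw)y, K associative).\<close>
definition isotope :: "('v \<Rightarrow> 'v \<Rightarrow> 'v) \<Rightarrow> 'v \<Rightarrow> 'v \<Rightarrow> 'v \<Rightarrow> 'v" where
  "isotope A w = (\<lambda>x y. A (A x w) y)"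

definition alg_iso :: "('f::field \<Rightarrow> 'v::ab_group_add \<Rightarrow> 'v) \<Rightarrow> ('v \<Rightarrow> 'v \<Rightarrow> 'v) \<Rightarrow> ('v \<Rightarrow> 'v \<Rightarrow> 'v) \<Rightarrow> ('v \<Rightarrow> 'v) \<Rightarrow> bool" where
  "alg_iso scale A B \<phi> \<longleftrightarrow> Vector_Spaces.linear scale scale \<phi> \<and> bij \<phi> \<and>
     (\<forall>x y. \<phi> (A x y) = B (\<phi> x) (\<phi> y))"

definition alg_isomorphic :: "('f::field \<Rightarrow> 'v::ab_group_add \<Rightarrow> 'v) \<Rightarrow> ('v \<Rightarrow> 'v \<Rightarrow> 'v) \<Rightarrow> ('v \<Rightarrow> 'v \<Rightarrow> 'v) \<Rightarrow> bool" where
  "alg_isomorphic scale A B \<longleftrightarrow> (\<exists>\<phi>. alg_iso scale A B \<phi>)"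

definition GL :: "('f::field \<Rightarrow> 'v::ab_group_add \<Rightarrow> 'v) \<Rightarrow> ('v \<Rightarrow> 'v) set" where
  "GL scale = {f. Vector_Spaces.linear scale scale f \<and> bij f}"

end

theory Submission
  imports Defs
begin

text \<open>If the homotope \<open>K^(f,g)\<close> has a unit \<open>c\<close>, then \<open>f(c) g(y) = y\<close> and
  \<open>f(x) g(c) = x\<close>; multiplying by \<open>g(1)\<close> resp. \<open>f(1)\<close> and using associativity and
  commutativity gives \<open>f = L(f(1))\<close> and \<open>g = L(g(1))\<close>, with \<open>w = f(1) g(1)\<close> invertible,
  so \<open>K^(f,g) = K^(w)\<close>. Left multiplication \<open>L(w)\<close> is an isomorphism \<open>K^(w) \<rightarrow> K\<close> with
  inverse \<open>L(w\<inverse>)\<close>, so the isomorphisms \<open>K^(w) \<rightarrow> K\<close> are exactly the \<open>\<sigma> \<circ> L(w)\<close>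
  with \<open>\<sigma> \<in> Aut(K)\<close>; conversely, anything isomorphic to the unital \<open>K\<close> is unital.\<close>

lemma alg_iso_comp:
  assumes "alg_iso scale A B \<phi>" and "alg_iso scale B C \<psi>"
  shows "alg_iso scale A C (\<psi> \<circ> \<phi>)"
  using assms unfolding alg_iso_def
  by (auto intro: Vector_Spaces.linear_compose bij_comp)

lemma unital_if_alg_iso:
  assumes iso: "alg_iso scale A B \<phi>" and "unital B"
  shows "unital A"
proof -
  obtain e where e: "is_unit_elem B e" using \<open>unital B\<close> unfolding unital_def by blast
  have bij: "bij \<phi>" and hom: "\<And>x y. \<phi> (A x y) = B (\<phi> x) (\<phi> y)"
    using iso unfolding alg_iso_def by auto
  have "\<phi> (inv \<phi> e) = e" using bij by (simp add: bij_is_surj surj_f_inv_f)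
  then have "A (inv \<phi> e) x = x \<and> A x (inv \<phi> e) = x" for x
    using hom[of "inv \<phi> e" x] hom[of x "inv \<phi> e"] e bij_is_inj[OF bij]
    by (auto simp: is_unit_elem_def dest: injD)
  then show ?thesis unfolding unital_def is_unit_elem_def by blast
qed

locale comm_unital_algebra =
  fixes scale :: "'f::field \<Rightarrow> 'v::ab_group_add \<Rightarrow> 'v"
    and K :: "'v \<Rightarrow> 'v \<Rightarrow> 'v"
    and e :: 'v
  assumes bilinear: "bilinear_mult scale K"
    and unit: "is_unit_elem K e"
    and comm: "commutative_alg K"
    and assoc: "associative_alg K"
begin

lemma mult_assoc: "K (K x y) z = K x (K y z)"
  using assoc unfolding associative_alg_def by blast

lemma mult_commute: "K x y = K y x"
  using comm unfolding commutative_alg_def by blast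

lemma mult_left_commute: "K x (K y z) = K y (K x z)"
  by (metis mult_assoc mult_commute)

lemma mult_unit_left [simp]: "K e x = x"
  using unit unfolding is_unit_elem_def by blast

lemma mult_unit_right [simp]: "K x e = x"
  using unit unfolding is_unit_elem_def by blast

lemmas mult_ac = mult_assoc mult_commute mult_left_commute

lemma linear_lmult: "Vector_Spaces.linear scale scale (lmult K x)"
  using bilinear unfolding bilinear_mult_def lmult_def by blast

lemma is_unit_elem_iff: "is_unit_elem K c \<longleftrightarrow> c = e"
  unfolding is_unit_elem_def by (metis mult_unit_left mult_unit_right)

lemma is_inverse_iff: "is_inverse K w z \<longleftrightarrow> K w z = e"
  unfolding is_inverse_def is_unit_elem_iff by (metis mult_commute)

lemma invertible_elem_iff: "invertible_elem K w \<longleftrightarrow> (\<exists>z. K w z = e)"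
  unfolding invertible_elem_def is_inverse_iff ..

lemma lmult_inverse_cancel:
  assumes "K w z = e"
  shows "lmult K z \<circ> lmult K w = id"
  using assms by (simp add: fun_eq_iff lmult_def flip: mult_assoc) (metis mult_commute mult_unit_left)

lemma bij_lmult:
  assumes "K w z = e"
  shows "bij (lmult K w)"
proof (rule o_bij)
  show "lmult K z \<circ> lmult K w = id" by (rule lmult_inverse_cancel[OF assms])
  show "lmult K w \<circ> lmult K z = id"
    by (rule lmult_inverse_cancel) (use assms mult_commute in metis)
qed

lemma homotope_lmult: "homotope K (lmult K u) (lmult K v) = isotope K (K u v)"
  unfolding homotope_def isotope_def lmult_def by (simp add: fun_eq_iff mult_ac)

lemma isotope_inj:
  assumes "isotope K w = isotope K w'"
  shows "w = w'"
  using fun_cong[OF fun_cong[OF assms, of e], of e] by (simp add: isotope_def)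

lemma is_unit_elem_isotope:
  assumes "is_inverse K w z"
  shows "is_unit_elem (isotope K w) z"
  using assms unfolding is_inverse_iff is_unit_elem_def isotope_def
  by (metis mult_ac mult_unit_left)

lemma homotope_unit_imp_lmult:
  assumes "is_unit_elem (homotope K f g) c"
  shows "f = lmult K (f e)" and "g = lmult K (g e)"
    and "K (K (f e) (g e)) (K (g c) (f c)) = e"
proof -
  have left: "K (f c) (g y) = y" and right: "K (f x) (g c) = x" for x y
    using assms by (auto simp: is_unit_elem_def homotope_def)
  have "K (g e) y = K (K (f c) (g e)) (g y)" for y
    using left[of y] by (metis mult_ac)
  then show "g = lmult K (g e)"
    using left[of e] by (simp add: lmult_def fun_eq_iff)
  have "K (f e) x = K (K (f e) (g c)) (f x)" for x
    using right[of x] by (metis mult_ac)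
  then show "f = lmult K (f e)"
    using right[of e] by (simp add: lmult_def fun_eq_iff)
  have "K (K (f e) (g e)) (K (g c) (f c)) = K (K (f e) (g c)) (K (f c) (g e))"
    by (metis mult_ac)
  then show "K (K (f e) (g e)) (K (g c) (f c)) = e"
    using left[of e] right[of e] by simp
qed

lemma unital_homotope_iff:
  "unital (homotope K f g) \<longleftrightarrow> (\<exists>w. invertible_elem K w \<and> homotope K f g = isotope K w)"
proof
  assume "unital (homotope K f g)"
  then obtain c where c: "is_unit_elem (homotope K f g) c" unfolding unital_def by blast
  have "homotope K f g = isotope K (K (f e) (g e))"
    using homotope_lmult[of "f e" "g e"] homotope_unit_imp_lmult(1,2)[OF c] by metis
  moreover have "invertible_elem K (K (f e) (g e))"
    using homotope_unit_imp_lmult(3)[OF c] invertible_elem_iff by blast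
  ultimately show "\<exists>w. invertible_elem K w \<and> homotope K f g = isotope K w" by blast
next
  assume "\<exists>w. invertible_elem K w \<and> homotope K f g = isotope K w"
  then show "unital (homotope K f g)"
    unfolding unital_def invertible_elem_def using is_unit_elem_isotope by metis
qed

lemma homotope_eq_isotope_imp_lmult:
  assumes "invertible_elem K w" and w: "homotope K f g = isotope K w"
  shows "\<exists>u v. w = K u v \<and> f = lmult K u \<and> g = lmult K v"
proof (intro exI conjI)
  obtain z where "is_unit_elem (homotope K f g) z"
    using assms is_unit_elem_isotope unfolding invertible_elem_def by metis
  note lmult_fg = homotope_unit_imp_lmult(1,2)[OF this]
  show "f = lmult K (f e)" and "g = lmult K (g e)" by (fact lmult_fg)+
  have "isotope K w = isotope K (K (f e) (g e))"
    using lmult_fg w homotope_lmult by metis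
  then show "w = K (f e) (g e)" by (rule isotope_inj)
qed

lemma alg_iso_isotope_lmult:
  assumes "K w z = e"
  shows "alg_iso scale (isotope K w) K (lmult K w)"
proof -
  have "K w (K (K x w) y) = K (K w x) (K w y)" for x y
    by (simp add: mult_ac)
  then show ?thesis
    unfolding alg_iso_def using linear_lmult bij_lmult[OF assms] by (simp add: isotope_def lmult_def)
qed

lemma alg_iso_lmult_isotope:
  assumes "K w z = e"
  shows "alg_iso scale K (isotope K w) (lmult K z)"
proof -
  have "K z (K x y) = K (K (K z x) w) (K z y)" for x y
    using assms by (metis mult_ac mult_unit_left)
  moreover have "K z w = e" using assms mult_commute by metis
  ultimately show ?thesis
    unfolding alg_iso_def using linear_lmult bij_lmult by (simp add: isotope_def lmult_def)
qed

lemma alg_iso_isotope_iff: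
  assumes "invertible_elem K w"
  shows "alg_iso scale (isotope K w) K \<phi> \<longleftrightarrow>
    (\<exists>\<sigma>. alg_iso scale K K \<sigma> \<and> \<phi> = \<sigma> \<circ> lmult K w)"
proof
  obtain z where z: "K w z = e" using assms invertible_elem_iff by blast
  assume \<phi>: "alg_iso scale (isotope K w) K \<phi>"
  have "alg_iso scale K K (\<phi> \<circ> lmult K z)"
    using alg_iso_comp[OF alg_iso_lmult_isotope[OF z] \<phi>] .
  moreover have "\<phi> = (\<phi> \<circ> lmult K z) \<circ> lmult K w"
    using lmult_inverse_cancel[OF z] by (simp add: comp_assoc)
  ultimately show "\<exists>\<sigma>. alg_iso scale K K \<sigma> \<and> \<phi> = \<sigma> \<circ> lmult K w" by blast
next
  obtain z where z: "K w z = e" using assms invertible_elem_iff by blast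
  assume "\<exists>\<sigma>. alg_iso scale K K \<sigma> \<and> \<phi> = \<sigma> \<circ> lmult K w"
  then show "alg_iso scale (isotope K w) K \<phi>"
    using alg_iso_comp[OF alg_iso_isotope_lmult[OF z]] by blast
qed

lemma alg_isomorphic_isotope:
  assumes "invertible_elem K w"
  shows "alg_isomorphic scale (isotope K w) K"
  using assms alg_iso_isotope_lmult invertible_elem_iff unfolding alg_isomorphic_def by blast

end

theorem lemma1p9:
  fixes scale :: "'f::field \<Rightarrow> 'v::ab_group_add \<Rightarrow> 'v"
    and K :: "'v \<Rightarrow> 'v \<Rightarrow> 'v"
    and f g :: "'v \<Rightarrow> 'v"
  assumes "vector_space scale"
    and "\<exists>B. finite_dimensional_vector_space scale B"
    and "bilinear_mult scale K"
    and "unital K" and "commutative_alg K" and "associative_alg K"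
    and "f \<in> GL scale" and "g \<in> GL scale"
  shows "(unital (homotope K f g) \<longleftrightarrow>
            (\<exists>w. invertible_elem K w \<and> homotope K f g = isotope K w))
       \<and> ((\<exists>w. invertible_elem K w \<and> homotope K f g = isotope K w) \<longleftrightarrow>
            alg_isomorphic scale (homotope K f g) K)
       \<and> ((\<exists>w. invertible_elem K w \<and> homotope K f g = isotope K w) \<longrightarrow>
           (\<exists>!w. invertible_elem K w \<and> homotope K f g = isotope K w)
         \<and> (\<forall>w. invertible_elem K w \<and> homotope K f g = isotope K w \<longrightarrow>
              (\<forall>z. is_inverse K w z \<longrightarrow> is_unit_elem (homotope K f g) z)
            \<and> (\<exists>u v. w = K u v \<and> f = lmult K u \<and> g = lmult K v)
            \<and> (\<forall>\<phi>. Vector_Spaces.linear scale scale \<phi> \<longrightarrow>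
                 (alg_iso scale (homotope K f g) K \<phi> \<longleftrightarrow>
                  (\<exists>\<sigma>. alg_iso scale K K \<sigma> \<and> \<phi> = \<sigma> \<circ> lmult K w)))))"
proof -
  obtain e where "is_unit_elem K e" using \<open>unital K\<close> unfolding unital_def by blast
  then interpret comm_unital_algebra scale K e
    using assms(3,5,6) by unfold_locales
  have iso_imp_unital: "alg_isomorphic scale (homotope K f g) K \<Longrightarrow> unital (homotope K f g)"
    using unital_if_alg_iso \<open>unital K\<close> unfolding alg_isomorphic_def by blast
  have unique: "\<exists>!w. invertible_elem K w \<and> homotope K f g = isotope K w"
    if "\<exists>w. invertible_elem K w \<and> homotope K f g = isotope K w"
    using that isotope_inj by metis
  show ?thesis
    using unital_homotope_iff alg_isomorphic_isotope iso_imp_unital unique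
      is_unit_elem_isotope homotope_eq_isotope_imp_lmult alg_iso_isotope_iff
    by metis
qed

end
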